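(* Let $B=B(x^{(0)};R)\subset\mathbb R^n$, let $x^{(1)},\dots,x^{(n+1)}\in B$ be the vertices of a nondegenerate simplex $S$ with basic Lagrange polynomials $\lambda_j(x)=\sum_{i=1}^n l_{ij}x_i+l_{n+1,j}$, and let $P:C(B)\to\Pi_1(\mathbb R^n)$ be the interpolation projector with nodes $x^{(j)}$. Then $$\|P\|_B=\max_{f_j=\pm1}\Big[R\Big(\sum_{i=1}^n\Big(\sum_{j=1}^{n+1}f_jl_{ij}\Big)^2\Big)^{1/2}+\Big|\sum_{j=1}^{n+1}f_j\lambda_j(x^{(0)})\Big|\Big],$$ where the maximum is over all $(f_1,\dots,f_{n+1})\in\{-1,1\}^{n+1}$. In particular, if the center of gravity of $S$ coincides with $x^{(0)}$, then $\|P\|_B=\max_{f_j=\pm1}\big[R(\sum_{i=1}^n(\sum_{j=1}^{n+1}f_jl_{ij})^2)^{1/2}+\frac1{n+1}|\sum_{j=1}^{n+1}f_j|\big]$.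
   Context: $B(x^{(0)};R)$ is the closed Euclidean ball of center $x^{(0)}$ and radius $R$. $C(\Omega)$ is the space of continuous real functions on $\Omega$ with the sup norm; $\Pi_1(\mathbb R^n)$ is the space of polynomials of degree $\le1$ in $n$ variables. The interpolation projector $P$ with nodes $x^{(j)}$ is defined by $Pf\in\Pi_1(\mathbb R^n)$, $Pf(x^{(j)})=f(x^{(j)})$, i.e. $Pf=\sum_j f(x^{(j)})\lambda_j$; $\|P\|_B$ is its operator norm on $C(B)$. The vertex matrix $A$ of $S$ has rows $(x^{(j)}_1,\dots,x^{(j)}_n,1)$, $A^{-1}=(l_{ij})$, and $\lambda_j(x)=\sum_i l_{ij}x_i+l_{n+1,j}$. *)

theory Defs
  imports "HOL-Analysis.Analysis" "HOL-Library.FuncSet"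
begin

text \<open>Affine function x \<mapsto> a \<bullet> x + b (a polynomial of degree at most 1 on R^n);
  the coefficients of a are the l_{ij}, i = 1..n, and b is l_{n+1,j}.\<close>
definition aff :: "real^'n \<Rightarrow> real \<Rightarrow> real^'n \<Rightarrow> real" where
  "aff a b y = a \<bullet> y + b"

definition is_lagrange_basis ::
  "nat \<Rightarrow> (nat \<Rightarrow> real^'n) \<Rightarrow> (nat \<Rightarrow> real^'n) \<Rightarrow> (nat \<Rightarrow> real) \<Rightarrow> bool" where
  "is_lagrange_basis N x a b \<longleftrightarrow>
     (\<forall>j\<in>{1..N+1}. \<forall>k\<in>{1..N+1}. aff (a j) (b j) (x k) = (if j = k then 1 else 0))"

definition interp_proj ::
  "nat \<Rightarrow> (nat \<Rightarrow> real^'n) \<Rightarrow> (nat \<Rightarrow> real^'n) \<Rightarrow> (nat \<Rightarrow> real) \<Rightarrow> (real^'n \<Rightarrow> real) \<Rightarrow> real^'n \<Rightarrow> real" where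
  "interp_proj N x a b f y = (\<Sum>j=1..N+1. f (x j) * aff (a j) (b j) y)"

definition proj_norm ::
  "(real^'n) set \<Rightarrow> nat \<Rightarrow> (nat \<Rightarrow> real^'n) \<Rightarrow> (nat \<Rightarrow> real^'n) \<Rightarrow> (nat \<Rightarrow> real) \<Rightarrow> real" where
  "proj_norm K N x a b =
     (SUP f \<in> {f. continuous_on K f \<and> (\<forall>y\<in>K. \<bar>f y\<bar> \<le> 1)}.
        SUP y \<in> K. \<bar>interp_proj N x a b f y\<bar>)"

end

theory Submission
  imports Defs
begin

text \<open>
  Choosing signs \<open>f\<^sub>j = sgn \<lambda>\<^sub>j(y)\<close> shows that the Lebesgue function \<open>\<Sum>\<^sub>j |\<lambda>\<^sub>j(y)|\<close> is the
  maximum over sign vectors \<open>f\<close> of the affine functions \<open>\<Sum>\<^sub>j f\<^sub>j \<lambda>\<^sub>j(y) = c\<^sub>f \<bullet> y + d\<^sub>f\<close>.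
  On the ball each of these attains its maximum \<open>R |c\<^sub>f| + c\<^sub>f \<bullet> x\<^sub>0 + d\<^sub>f\<close> in the direction
  of \<open>c\<^sub>f\<close>; as \<open>f\<close> and \<open>-f\<close> give the same \<open>|c\<^sub>f|\<close>, the value at the centre may be taken in
  absolute value. The norm of an interpolation projector on \<open>C(B)\<close> is the maximum of its
  Lebesgue function: the bound is immediate, and it is attained by a Tietze extension of the
  maximising sign pattern at the nodes to a continuous function of norm 1. At the centroid
  every \<open>\<lambda>\<^sub>j\<close> takes the value \<open>1/(n+1)\<close>.
\<close>

lemma inner_le_on_cball:
  fixes c x0 y :: "'a::real_inner"
  assumes "y \<in> cball x0 r"
  shows "c \<bullet> y \<le> c \<bullet> x0 + r * norm c"
proof -
  have "c \<bullet> (y - x0) \<le> norm c * norm (y - x0)" by (rule norm_cauchy_schwarz)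
  also have "\<dots> \<le> norm c * r"
    using assms by (intro mult_left_mono) (auto simp: dist_norm norm_minus_commute)
  finally show ?thesis by (simp add: inner_diff_right algebra_simps)
qed

lemma inner_attains_on_cball:
  fixes c x0 :: "'a::real_inner"
  assumes "0 \<le> r"
  obtains y where "y \<in> cball x0 r" "c \<bullet> y = c \<bullet> x0 + r * norm c"
proof (cases "c = 0")
  case True
  with assms show ?thesis by (intro that[of x0]) auto
next
  case False
  let ?y = "x0 + (r / norm c) *\<^sub>R c"
  have "c \<bullet> ?y = c \<bullet> x0 + r * norm c"
    using False by (simp add: inner_add_right power2_norm_eq_inner[symmetric] power2_eq_square)
  with assms False show ?thesis by (intro that[of ?y]) (auto simp: dist_norm)
qed

lemma weighted_sum_le_sum_abs:
  fixes f w :: "'i \<Rightarrow> real"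
  assumes "\<forall>j\<in>I. \<bar>f j\<bar> \<le> 1"
  shows "(\<Sum>j\<in>I. f j * w j) \<le> (\<Sum>j\<in>I. \<bar>w j\<bar>)"
proof (rule sum_mono)
  fix j assume "j \<in> I"
  then have "\<bar>f j\<bar> * \<bar>w j\<bar> \<le> \<bar>w j\<bar>" using assms by (simp add: mult_left_le_one_le)
  then show "f j * w j \<le> \<bar>w j\<bar>" by (metis abs_ge_self abs_mult order_trans)
qed

lemma sum_abs_eq_sign_sum:
  obtains f where "f \<in> PiE I (\<lambda>_. {-1, 1::real})" "(\<Sum>j\<in>I. \<bar>w j\<bar>) = (\<Sum>j\<in>I. f j * w j)"
proof
  let ?f = "\<lambda>j\<in>I. if 0 \<le> w j then 1 else -1::real"
  show "?f \<in> PiE I (\<lambda>_. {-1, 1})" by auto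
  show "(\<Sum>j\<in>I. \<bar>w j\<bar>) = (\<Sum>j\<in>I. ?f j * w j)" by (rule sum.cong) auto
qed

lemma continuous_extension_of_node_values:
  fixes x :: "'i \<Rightarrow> 'a::{metric_space,second_countable_topology}"
  assumes "finite I" "inj_on x I" "x ` I \<subseteq> K" "\<forall>j\<in>I. \<bar>v j\<bar> \<le> 1"
  obtains g :: "'a \<Rightarrow> real"
    where "continuous_on K g" "\<forall>y\<in>K. \<bar>g y\<bar> \<le> 1" "\<forall>j\<in>I. g (x j) = v j"
proof -
  let ?h = "\<lambda>z. v (inv_into I x z)"
  have "continuous_on (x ` I) ?h" using assms(1) by (intro continuous_on_finite) simp
  moreover have "closedin (top_of_set K) (x ` I)"
    using assms(1,3) by (intro closed_subset finite_imp_closed) auto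
  moreover have "norm (?h z) \<le> 1" if "z \<in> x ` I" for z
    using that assms(2,4) by auto
  ultimately obtain g where "continuous_on K g" "\<And>z. z \<in> x ` I \<Longrightarrow> g z = ?h z"
      "\<And>z. z \<in> K \<Longrightarrow> norm (g z) \<le> 1"
    using Tietze[of "x ` I" ?h K 1] by auto
  with assms(2) show ?thesis by (intro that) auto
qed

lemma interpolation_operator_norm_eq_Lebesgue_max:
  fixes x :: "'i \<Rightarrow> 'a::{metric_space,second_countable_topology}" and L :: "'i \<Rightarrow> 'a \<Rightarrow> real"
  assumes I: "finite I" "inj_on x I" "x ` I \<subseteq> K"
    and upper: "\<And>y. y \<in> K \<Longrightarrow> (\<Sum>j\<in>I. \<bar>L j y\<bar>) \<le> M"
    and attained: "y0 \<in> K" "M \<le> (\<Sum>j\<in>I. \<bar>L j y0\<bar>)"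
  shows "(SUP g \<in> {g. continuous_on K g \<and> (\<forall>y\<in>K. \<bar>g y\<bar> \<le> 1)}.
            SUP y \<in> K. \<bar>\<Sum>j\<in>I. g (x j) * L j y\<bar>) = M"
    (is "(SUP g \<in> ?G. SUP y \<in> K. ?P g y) = M")
proof -
  have bound: "?P g y \<le> M" if "g \<in> ?G" "y \<in> K" for g y
  proof -
    have "?P g y \<le> (\<Sum>j\<in>I. \<bar>g (x j) * L j y\<bar>)"
      by (rule sum_abs)
    also have "\<dots> \<le> (\<Sum>j\<in>I. \<bar>L j y\<bar>)"
      using that I(3) by (intro sum_mono) (auto simp: abs_mult intro!: mult_left_le_one_le)
    finally show ?thesis using upper[OF that(2)] by linarith
  qed
  then have SUP_bound: "(SUP y \<in> K. ?P g y) \<le> M" if "g \<in> ?G" for g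
    using attained(1) that by (intro cSUP_least) auto
  obtain f where f_signs: "f \<in> PiE I (\<lambda>_. {-1, 1::real})"
    and f: "(\<Sum>j\<in>I. \<bar>L j y0\<bar>) = (\<Sum>j\<in>I. f j * L j y0)"
    by (rule sum_abs_eq_sign_sum)
  from f_signs have "\<forall>j\<in>I. \<bar>f j\<bar> \<le> 1" by (auto simp: PiE_iff)
  then obtain g where "continuous_on K g" "\<forall>y\<in>K. \<bar>g y\<bar> \<le> 1" and gx: "\<forall>j\<in>I. g (x j) = f j"
    by (rule continuous_extension_of_node_values[OF I])
  then have g: "g \<in> ?G" by simp
  have "M \<le> ?P g y0"
    using attained(2) f gx by simp
  also have "\<dots> \<le> (SUP y \<in> K. ?P g y)"
    using bound[OF g] by (intro cSUP_upper[OF attained(1)] bdd_aboveI2)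
  also have "\<dots> \<le> (SUP g \<in> ?G. SUP y \<in> K. ?P g y)"
    using SUP_bound by (intro cSUP_upper[OF g] bdd_aboveI2)
  finally have "M \<le> (SUP g \<in> ?G. SUP y \<in> K. ?P g y)" .
  moreover have "(SUP g \<in> ?G. SUP y \<in> K. ?P g y) \<le> M"
    by (rule cSUP_least) (use g SUP_bound in blast)+
  ultimately show ?thesis by (rule antisym[rotated])
qed

lemma aff_linear_combination:
  "(\<Sum>j\<in>I. f j * aff (a j) (b j) y) = aff (\<Sum>j\<in>I. f j *\<^sub>R a j) (\<Sum>j\<in>I. f j * b j) y"
  by (simp add: aff_def inner_sum_left sum.distrib distrib_left mult.commute)

lemma aff_affine_combination:
  assumes "sum u K = 1"
  shows "aff c d (\<Sum>k\<in>K. u k *\<^sub>R x k) = (\<Sum>k\<in>K. u k * aff c d (x k))"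
  by (simp add: aff_def inner_sum_right distrib_left sum.distrib assms flip: sum_distrib_right)

lemma Lebesgue_function_aff_le_Max:
  fixes a :: "nat \<Rightarrow> real^'n" and b :: "nat \<Rightarrow> real" and x0 :: "real^'n" and R :: real and I :: "nat set"
  defines "V \<equiv> \<lambda>f. R * norm (\<Sum>j\<in>I. f j *\<^sub>R a j) + \<bar>\<Sum>j\<in>I. f j * aff (a j) (b j) x0\<bar>"
  assumes "finite I" "y \<in> cball x0 R"
  shows "(\<Sum>j\<in>I. \<bar>aff (a j) (b j) y\<bar>) \<le> Max (V ` PiE I (\<lambda>_. {-1, 1}))"
proof -
  obtain f where f: "f \<in> PiE I (\<lambda>_. {-1, 1::real})"
    and abs_eq: "(\<Sum>j\<in>I. \<bar>aff (a j) (b j) y\<bar>) = (\<Sum>j\<in>I. f j * aff (a j) (b j) y)"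
    by (rule sum_abs_eq_sign_sum)
  note abs_eq
  also have "\<dots> \<le> V f"
    using inner_le_on_cball[OF assms(3), of "\<Sum>j\<in>I. f j *\<^sub>R a j"]
    unfolding V_def aff_linear_combination unfolding aff_def by linarith
  also have "\<dots> \<le> Max (V ` PiE I (\<lambda>_. {-1, 1}))"
    using f assms(2) by (intro Max_ge finite_imageI finite_PiE imageI) auto
  finally show ?thesis .
qed

lemma Lebesgue_function_aff_attains_Max:
  fixes a :: "nat \<Rightarrow> real^'n" and b :: "nat \<Rightarrow> real" and x0 :: "real^'n" and R :: real and I :: "nat set"
  defines "V \<equiv> \<lambda>f. R * norm (\<Sum>j\<in>I. f j *\<^sub>R a j) + \<bar>\<Sum>j\<in>I. f j * aff (a j) (b j) x0\<bar>"
  assumes "finite I" "0 \<le> R"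
  obtains y where "y \<in> cball x0 R" "Max (V ` PiE I (\<lambda>_. {-1, 1})) \<le> (\<Sum>j\<in>I. \<bar>aff (a j) (b j) y\<bar>)"
proof -
  let ?F = "PiE I (\<lambda>_. {-1, 1::real})"
  have "Max (V ` ?F) \<in> V ` ?F"
    using assms(2) by (intro Max_in) (auto simp: finite_PiE PiE_eq_empty_iff)
  then obtain f where f: "f \<in> ?F" and M: "Max (V ` ?F) = V f" by auto
  define s where "s = (if 0 \<le> (\<Sum>j\<in>I. f j * aff (a j) (b j) x0) then 1 else -1 :: real)"
  define c where "c = (\<Sum>j\<in>I. (s * f j) *\<^sub>R a j)"
  obtain y where y: "y \<in> cball x0 R" and cy: "c \<bullet> y = c \<bullet> x0 + R * norm c"
    using inner_attains_on_cball[OF assms(3)] .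
  have "c = s *\<^sub>R (\<Sum>j\<in>I. f j *\<^sub>R a j)"
    by (simp add: c_def scaleR_sum_right)
  then have "norm c = norm (\<Sum>j\<in>I. f j *\<^sub>R a j)"
    by (simp add: s_def)
  moreover have "(\<Sum>j\<in>I. (s * f j) * aff (a j) (b j) x0) = \<bar>\<Sum>j\<in>I. f j * aff (a j) (b j) x0\<bar>"
    by (simp add: s_def mult.assoc sum_negf flip: sum_distrib_left)
  ultimately have "V f = R * norm c + (\<Sum>j\<in>I. (s * f j) * aff (a j) (b j) x0)"
    by (simp add: V_def)
  also have "\<dots> = (\<Sum>j\<in>I. (s * f j) * aff (a j) (b j) y)"
    by (simp only: aff_linear_combination c_def[symmetric]) (simp add: aff_def cy)
  also have "\<dots> \<le> (\<Sum>j\<in>I. \<bar>aff (a j) (b j) y\<bar>)"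
    using f by (intro weighted_sum_le_sum_abs) (auto simp: s_def abs_mult PiE_iff)
  finally show ?thesis using M y that by simp
qed

lemma Lagrange_basis_at_centroid:
  assumes "is_lagrange_basis N x a b" "j \<in> {1..N+1}"
  shows "aff (a j) (b j) ((1 / real (N+1)) *\<^sub>R (\<Sum>k=1..N+1. x k)) = 1 / real (N+1)"
proof -
  have "aff (a j) (b j) (\<Sum>k=1..N+1. (1 / real (N+1)) *\<^sub>R x k)
      = (\<Sum>k=1..N+1. 1 / real (N+1) * aff (a j) (b j) (x k))"
    by (rule aff_affine_combination) simp
  then have "aff (a j) (b j) ((1 / real (N+1)) *\<^sub>R (\<Sum>k=1..N+1. x k))
      = (\<Sum>k=1..N+1. 1 / real (N+1) * aff (a j) (b j) (x k))"
    by (simp only: scaleR_sum_right)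
  also have "\<dots> = (\<Sum>k=1..N+1. if j = k then 1 / real (N+1) else 0)"
    using assms unfolding is_lagrange_basis_def by (intro sum.cong) auto
  finally show ?thesis using assms(2) by simp
qed

theorem theorem11p1:
  fixes x :: "nat \<Rightarrow> real^'n" and x0 :: "real^'n" and R :: real
    and a :: "nat \<Rightarrow> real^'n" and b :: "nat \<Rightarrow> real"
  defines "N \<equiv> CARD('n)"
  assumes R: "R > 0"
    and nodes: "\<forall>j\<in>{1..N+1}. x j \<in> cball x0 R"
    and nondeg: "inj_on x {1..N+1}" "\<not> affine_dependent (x ` {1..N+1})"
    and lag: "is_lagrange_basis N x a b"
  shows "proj_norm (cball x0 R) N x a b =
           Max ((\<lambda>f. R * sqrt (\<Sum>i\<in>UNIV. (\<Sum>j=1..N+1. f j * (a j $ i))\<^sup>2)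
                      + \<bar>\<Sum>j=1..N+1. f j * aff (a j) (b j) x0\<bar>)
                ` (PiE {1..N+1} (\<lambda>_. {-1, 1}))) \<and>
         ((1 / real (N+1)) *\<^sub>R (\<Sum>j=1..N+1. x j) = x0 \<longrightarrow>
         proj_norm (cball x0 R) N x a b =
           Max ((\<lambda>f. R * sqrt (\<Sum>i\<in>UNIV. (\<Sum>j=1..N+1. f j * (a j $ i))\<^sup>2)
                      + (1 / real (N+1)) * \<bar>\<Sum>j=1..N+1. f j\<bar>)
                ` (PiE {1..N+1} (\<lambda>_. {-1, 1}))))"
proof -
  let ?I = "{1..N+1}"
  let ?F = "PiE ?I (\<lambda>_. {-1, 1::real})"
  define V where "V f = R * norm (\<Sum>j\<in>?I. f j *\<^sub>R a j) + \<bar>\<Sum>j\<in>?I. f j * aff (a j) (b j) x0\<bar>"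
    for f :: "nat \<Rightarrow> real"
  have sqrt_sum_eq_norm: "sqrt (\<Sum>i\<in>UNIV. (\<Sum>j=1..N+1. f j * (a j $ i))\<^sup>2) = norm (\<Sum>j\<in>?I. f j *\<^sub>R a j)"
    for f :: "nat \<Rightarrow> real"
    by (simp add: norm_vec_def L2_set_def)
  obtain y0 where "y0 \<in> cball x0 R" "Max (V ` ?F) \<le> (\<Sum>j\<in>?I. \<bar>aff (a j) (b j) y0\<bar>)"
    using Lebesgue_function_aff_attains_Max[of ?I R x0 a b] R unfolding V_def by auto
  then have norm_eq_Max: "proj_norm (cball x0 R) N x a b = Max (V ` ?F)"
    unfolding proj_norm_def interp_proj_def
    using nondeg(1) nodes Lebesgue_function_aff_le_Max[of ?I _ x0 R a b]
    by (intro interpolation_operator_norm_eq_Lebesgue_max) (auto simp: V_def)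
  show ?thesis
  proof (intro conjI impI)
    show "proj_norm (cball x0 R) N x a b =
        Max ((\<lambda>f. R * sqrt (\<Sum>i\<in>UNIV. (\<Sum>j=1..N+1. f j * (a j $ i))\<^sup>2)
                    + \<bar>\<Sum>j=1..N+1. f j * aff (a j) (b j) x0\<bar>) ` ?F)"
      unfolding norm_eq_Max V_def[abs_def] sqrt_sum_eq_norm ..
  next
    assume centroid: "(1 / real (N+1)) *\<^sub>R (\<Sum>j=1..N+1. x j) = x0"
    have "(\<Sum>j\<in>?I. f j * aff (a j) (b j) x0) = 1 / real (N+1) * (\<Sum>j\<in>?I. f j)" for f
    proof -
      have "(\<Sum>j\<in>?I. f j * aff (a j) (b j) x0) = (\<Sum>j\<in>?I. 1 / real (N+1) * f j)"
        using Lagrange_basis_at_centroid[OF lag] centroid by (intro sum.cong) auto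
      then show ?thesis by (simp only: sum_distrib_left)
    qed
    then show "proj_norm (cball x0 R) N x a b =
        Max ((\<lambda>f. R * sqrt (\<Sum>i\<in>UNIV. (\<Sum>j=1..N+1. f j * (a j $ i))\<^sup>2)
                    + 1 / real (N+1) * \<bar>\<Sum>j=1..N+1. f j\<bar>) ` ?F)"
      unfolding norm_eq_Max V_def[abs_def] sqrt_sum_eq_norm by (simp add: abs_mult)
  qed
qed

end
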